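(* If $G$ is a traceable graph (i.e. $G$ has a Hamilton path) of order $n\geq 3$, then $px_k(G)=2$ for each integer $k$ with $3\leq k\leq n$.
   Context: All graphs are finite, simple, undirected and connected. An edge-coloring of a graph assigns a color to each edge (adjacent edges may receive the same color). A tree in an edge-colored graph is proper if any two adjacent edges of the tree receive different colors. For $S\subseteq V(G)$, an $S$-tree is a subgraph of $G$ that is a tree containing all vertices of $S$. For a connected graph $G$ of order $n$ and an integer $k$ with $2\le k\le n$, an edge-coloring of $G$ is a $k$-proper coloring if for every set $S$ of $k$ vertices of $G$ there exists a proper $S$-tree in $G$. The $k$-proper index $px_k(G)$ is the minimum number of colors used in a $k$-proper coloring of $G$. *)

theory Defs
  imports Main
begin

definition simple_graph :: "'a set \<Rightarrow> 'a set set \<Rightarrow> bool" where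
  "simple_graph V E \<longleftrightarrow> finite V \<and>
     (\<forall>e\<in>E. \<exists>u v. u \<noteq> v \<and> e = {u, v} \<and> u \<in> V \<and> v \<in> V)"

definition walk :: "'a set set \<Rightarrow> 'a list \<Rightarrow> bool" where
  "walk F xs \<longleftrightarrow> xs \<noteq> [] \<and> (\<forall>i < length xs - 1. {xs ! i, xs ! (i + 1)} \<in> F)"

definition connected_on :: "'a set \<Rightarrow> 'a set set \<Rightarrow> bool" where
  "connected_on W F \<longleftrightarrow> (\<forall>u\<in>W. \<forall>v\<in>W. \<exists>xs. walk F xs \<and> hd xs = u \<and> last xs = v \<and> set xs \<subseteq> W)"

definition has_cycle :: "'a set set \<Rightarrow> bool" where
  "has_cycle F \<longleftrightarrow> (\<exists>xs. length xs \<ge> 3 \<and> distinct xs \<and> walk F xs \<and> {last xs, hd xs} \<in> F)"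

definition is_tree :: "'a set \<Rightarrow> 'a set set \<Rightarrow> bool" where
  "is_tree W F \<longleftrightarrow> W \<noteq> {} \<and> (\<forall>e\<in>F. e \<subseteq> W) \<and> connected_on W F \<and> \<not> has_cycle F"

definition S_tree :: "'a set \<Rightarrow> 'a set set \<Rightarrow> 'a set \<Rightarrow> 'a set \<Rightarrow> 'a set set \<Rightarrow> bool" where
  "S_tree V E S W F \<longleftrightarrow> W \<subseteq> V \<and> F \<subseteq> E \<and> is_tree W F \<and> S \<subseteq> W"

definition proper_edges :: "('a set \<Rightarrow> 'c) \<Rightarrow> 'a set set \<Rightarrow> bool" where
  "proper_edges c F \<longleftrightarrow> (\<forall>e\<in>F. \<forall>e'\<in>F. e \<noteq> e' \<and> e \<inter> e' \<noteq> {} \<longrightarrow> c e \<noteq> c e')"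

definition k_proper_coloring :: "'a set \<Rightarrow> 'a set set \<Rightarrow> nat \<Rightarrow> ('a set \<Rightarrow> 'c) \<Rightarrow> bool" where
  "k_proper_coloring V E k c \<longleftrightarrow>
     (\<forall>S. S \<subseteq> V \<and> card S = k \<longrightarrow> (\<exists>W F. S_tree V E S W F \<and> proper_edges c F))"

definition px :: "'a set \<Rightarrow> 'a set set \<Rightarrow> nat \<Rightarrow> nat" where
  "px V E k = (LEAST m. \<exists>c :: 'a set \<Rightarrow> nat. k_proper_coloring V E k c \<and> card (c ` E) = m)"

definition traceable :: "'a set \<Rightarrow> 'a set set \<Rightarrow> bool" where
  "traceable V E \<longleftrightarrow> (\<exists>xs. distinct xs \<and> set xs = V \<and> walk E xs)"

end

theory Submission
  imports Defs
begin

text \<open>A Hamilton path is a spanning tree of \<open>G\<close>, and colouring its edges alternately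
  with two colours makes it proper, so this single tree serves every vertex set \<open>S\<close>.
  Conversely, one colour is never enough for \<open>k \<ge> 3\<close>: the edges of a monochromatic
  proper tree are pairwise disjoint, and a connected graph whose edges form a matching
  has at most two vertices.\<close>

lemma walk_rev:
  assumes "walk F xs"
  shows "walk F (rev xs)"
  unfolding walk_def
proof (intro conjI allI impI)
  show "rev xs \<noteq> []" using assms unfolding walk_def by simp
next
  fix i assume i: "i < length (rev xs) - 1"
  define j where "j = length xs - 2 - i"
  have "{xs ! j, xs ! (j + 1)} \<in> F" using assms i unfolding walk_def j_def by simp
  moreover have "rev xs ! i = xs ! (j + 1)" "rev xs ! (i + 1) = xs ! j"
    using i by (simp_all add: rev_nth j_def Suc_diff_Suc)
  ultimately show "{rev xs ! i, rev xs ! (i + 1)} \<in> F" by (simp add: insert_commute)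
qed

lemma walk_drop_take:
  assumes "walk F xs" and "i \<le> j" and "j < length xs"
  shows "walk F (drop i (take (Suc j) xs))"
  using assms unfolding walk_def by (auto simp: add.commute[of i] add.left_commute[of _ i])

lemma walk_in_matching:
  assumes walk: "walk F xs" and matching: "pairwise disjnt F" and "i < length xs"
  shows "xs ! i \<in> {xs ! 0, xs ! 1}"
  using \<open>i < length xs\<close>
proof (induction i rule: less_induct)
  case (less i)
  show ?case
  proof (cases "i < 2")
    case True then show ?thesis by (cases i) auto
  next
    case False
    then obtain t where i: "i = t + 2" by (metis add.commute le_Suc_ex not_less)
    have "{xs ! t, xs ! (t + 1)} \<in> F" "{xs ! (t + 1), xs ! (t + 2)} \<in> F"
      using walk less.prems i unfolding walk_def by (simp_all add: add.assoc)
    moreover have "\<not> disjnt {xs ! t, xs ! (t + 1)} {xs ! (t + 1), xs ! (t + 2)}"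
      by (simp add: disjnt_def)
    ultimately have "{xs ! t, xs ! (t + 1)} = {xs ! (t + 1), xs ! (t + 2)}"
      using matching by (meson pairwiseD)
    then have "xs ! i \<in> {xs ! t, xs ! (t + 1)}" using i by blast
    with less.IH[of t] less.IH[of "t + 1"] less.prems i show ?thesis by auto
  qed
qed

lemma walk_in_matching_ends:
  assumes walk: "walk F xs" and matching: "pairwise disjnt F" and "hd xs \<noteq> last xs"
  shows "{hd xs, last xs} \<in> F"
proof -
  have "xs \<noteq> []" using walk unfolding walk_def by simp
  then have long: "1 < length xs" using \<open>hd xs \<noteq> last xs\<close> by (cases xs) auto
  have "last xs \<in> {xs ! 0, xs ! 1}"
    using walk_in_matching[OF walk matching, of "length xs - 1"] \<open>xs \<noteq> []\<close>
    by (simp add: last_conv_nth)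
  moreover have "hd xs = xs ! 0" using \<open>xs \<noteq> []\<close> by (simp add: hd_conv_nth)
  moreover have "{xs ! 0, xs ! 1} \<in> F" using walk long unfolding walk_def by auto
  ultimately show ?thesis using \<open>hd xs \<noteq> last xs\<close> by auto
qed

lemma connected_matching_card_le_2:
  assumes connected: "connected_on W F" and matching: "pairwise disjnt F"
  shows "card W \<le> 2"
proof (rule ccontr)
  assume "\<not> card W \<le> 2"
  then obtain T where "T \<subseteq> W" "card T = 3" using obtain_subset_with_card_n[of 3 W] by auto
  then obtain u v w where uvw: "u \<in> W" "v \<in> W" "w \<in> W" "u \<noteq> v" "u \<noteq> w" "v \<noteq> w"
    by (auto simp: card_3_iff)
  have edge: "{u, x} \<in> F" if "x \<in> W" "x \<noteq> u" for x
  proof -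
    obtain xs where "walk F xs" "hd xs = u" "last xs = x"
      using connected \<open>u \<in> W\<close> \<open>x \<in> W\<close> unfolding connected_on_def by blast
    then show ?thesis using walk_in_matching_ends[OF _ matching] that by auto
  qed
  have "{u, v} \<in> F" "{u, w} \<in> F" using edge uvw by auto
  moreover have "\<not> disjnt {u, v} {u, w}" by (simp add: disjnt_def)
  ultimately have "{u, v} = {u, w}" using matching by (meson pairwiseD)
  then show False using uvw by (auto simp: doubleton_eq_iff)
qed

lemma proper_edges_monochromatic_matching:
  assumes "proper_edges c F" and "\<forall>e\<in>F. \<forall>e'\<in>F. c e = c e'"
  shows "pairwise disjnt F"
  using assms unfolding proper_edges_def pairwise_def disjnt_def by blast

lemma k_proper_coloring_ge_2_colours:
  assumes graph: "simple_graph V E" and coloring: "k_proper_coloring V E k c"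
    and "3 \<le> k" and "k \<le> card V"
  shows "2 \<le> card (c ` E)"
proof (rule ccontr)
  assume "\<not> 2 \<le> card (c ` E)"
  moreover have "finite V" "E \<subseteq> Pow V" using graph unfolding simple_graph_def by auto
  then have "finite (c ` E)" by (meson finite_Pow_iff finite_imageI finite_subset)
  ultimately have "card (c ` E) \<le> Suc 0" "finite (c ` E)" by simp_all
  then have "\<forall>x\<in>c ` E. \<forall>y\<in>c ` E. x = y" using card_le_Suc0_iff_eq by blast
  then have mono: "\<forall>e\<in>E. \<forall>e'\<in>E. c e = c e'" by blast
  obtain S where "S \<subseteq> V" "card S = k" using obtain_subset_with_card_n \<open>k \<le> card V\<close> by metis
  then obtain W F where tree: "S_tree V E S W F" and proper: "proper_edges c F"
    using coloring unfolding k_proper_coloring_def by blast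
  have tree_parts: "W \<subseteq> V" "F \<subseteq> E" "S \<subseteq> W" "connected_on W F"
    using tree unfolding S_tree_def is_tree_def by auto
  have "pairwise disjnt F"
    using proper_edges_monochromatic_matching[OF proper] mono \<open>F \<subseteq> E\<close> by (meson subsetD)
  then have "card W \<le> 2" using connected_matching_card_le_2 \<open>connected_on W F\<close> by blast
  moreover have "card S \<le> card W"
    using tree_parts \<open>finite V\<close> by (meson card_mono finite_subset)
  ultimately show False using \<open>card S = k\<close> \<open>3 \<le> k\<close> by simp
qed

definition path_edges :: "'a list \<Rightarrow> 'a set set" where
  "path_edges xs = {{xs ! i, xs ! (i + 1)} | i. i + 1 < length xs}"

lemma path_edgesI: "i + 1 < length xs \<Longrightarrow> {xs ! i, xs ! (i + 1)} \<in> path_edges xs"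
  unfolding path_edges_def by blast

lemma walk_path_edges: "xs \<noteq> [] \<Longrightarrow> walk (path_edges xs) xs"
  unfolding walk_def path_edges_def by auto

lemma path_edges_subset: "walk F xs \<Longrightarrow> path_edges xs \<subseteq> F"
  unfolding walk_def path_edges_def by auto

lemma path_edge_subset_set: "e \<in> path_edges xs \<Longrightarrow> e \<subseteq> set xs"
  unfolding path_edges_def by auto

lemma path_edges_meet:
  assumes "distinct xs" and "i + 1 < length xs" and "j + 1 < length xs"
    and "{xs ! i, xs ! (i + 1)} \<inter> {xs ! j, xs ! (j + 1)} \<noteq> {}"
  shows "i = j \<or> j = i + 1 \<or> i = j + 1"
  using assms by (auto simp: nth_eq_iff_index_eq)

lemma path_edge_index_unique:
  assumes "distinct xs" and "i + 1 < length xs" and "j + 1 < length xs"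
    and "{xs ! i, xs ! (i + 1)} = {xs ! j, xs ! (j + 1)}"
  shows "i = j"
  using assms by (auto simp: doubleton_eq_iff nth_eq_iff_index_eq)

lemma path_edge_neighbour:
  assumes "distinct xs" and "p < length xs" and "{xs ! p, z} \<in> path_edges xs"
  shows "(p + 1 < length xs \<and> z = xs ! (p + 1)) \<or> (0 < p \<and> z = xs ! (p - 1))"
proof -
  obtain i where i: "i + 1 < length xs" "{xs ! p, z} = {xs ! i, xs ! (i + 1)}"
    using assms(3) unfolding path_edges_def by blast
  then have "p = i \<and> z = xs ! (i + 1) \<or> p = i + 1 \<and> z = xs ! i"
    using assms(1,2) by (auto simp: doubleton_eq_iff nth_eq_iff_index_eq)
  then show ?thesis using i by auto
qed

lemma connected_on_path_edges:
  assumes "xs \<noteq> []"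
  shows "connected_on (set xs) (path_edges xs)"
proof -
  have forward: "\<exists>ys. walk (path_edges xs) ys \<and> hd ys = xs ! i \<and> last ys = xs ! j \<and> set ys \<subseteq> set xs"
    if "i \<le> j" "j < length xs" for i j
  proof (intro exI conjI)
    let ?ys = "drop i (take (j + 1) xs)"
    show "walk (path_edges xs) ?ys"
      using walk_drop_take[OF walk_path_edges[OF assms]] that by simp
    show "hd ?ys = xs ! i" "last ?ys = xs ! j"
      using that by (simp_all add: hd_drop_conv_nth last_conv_nth)
    show "set ?ys \<subseteq> set xs" by (meson set_drop_subset set_take_subset subset_trans)
  qed
  show ?thesis
    unfolding connected_on_def
  proof (intro ballI)
    fix u v assume "u \<in> set xs" "v \<in> set xs"
    then obtain i j where "i < length xs" "u = xs ! i" "j < length xs" "v = xs ! j"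
      by (metis in_set_conv_nth)
    then show "\<exists>ys. walk (path_edges xs) ys \<and> hd ys = u \<and> last ys = v \<and> set ys \<subseteq> set xs"
      using forward[of i j] forward[of j i] walk_rev
      by (metis hd_rev last_rev le_cases set_rev walk_def)
  qed
qed

lemma has_cycle_two_neighbours:
  assumes "has_cycle F"
  obtains C where "finite C" "C \<noteq> {}"
    and "\<And>y. y \<in> C \<Longrightarrow> \<exists>a\<in>C. \<exists>b\<in>C. a \<noteq> b \<and> {y, a} \<in> F \<and> {y, b} \<in> F"
proof -
  obtain ys where long: "length ys \<ge> 3" and "distinct ys" and "walk F ys"
    and closing: "{last ys, hd ys} \<in> F"
    using assms unfolding has_cycle_def by blast
  define K where "K = length ys"
  have K: "3 \<le> K" "ys \<noteq> []" using long unfolding K_def by auto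
  have step: "{ys ! j, ys ! ((j + 1) mod K)} \<in> F" if "j < K" for j
  proof (cases "j + 1 < K")
    case True then show ?thesis using \<open>walk F ys\<close> unfolding walk_def K_def by simp
  next
    case False
    then have "j = K - 1" using that by simp
    then show ?thesis
      using closing K by (simp add: K_def last_conv_nth hd_conv_nth insert_commute)
  qed
  have "\<exists>a\<in>set ys. \<exists>b\<in>set ys. a \<noteq> b \<and> {y, a} \<in> F \<and> {y, b} \<in> F" if "y \<in> set ys" for y
  proof -
    obtain m where m: "m < K" "y = ys ! m" using \<open>y \<in> set ys\<close> unfolding K_def by (metis in_set_conv_nth)
    define p where "p = (if m = 0 then K - 1 else m - 1)"
    have p: "p < K" "(p + 1) mod K = m" using K m by (auto simp: p_def)
    have "(m + 1) mod K \<noteq> p"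
      using K m by (cases "m + 1 = K") (auto simp: p_def)
    then have "ys ! ((m + 1) mod K) \<noteq> ys ! p"
      using \<open>distinct ys\<close> p K by (simp add: K_def nth_eq_iff_index_eq)
    moreover have "{y, ys ! ((m + 1) mod K)} \<in> F" "{y, ys ! p} \<in> F"
      using step[OF m(1)] step[OF p(1)] m p by (simp_all add: insert_commute)
    moreover have "ys ! ((m + 1) mod K) \<in> set ys" "ys ! p \<in> set ys"
      using K p(1) by (simp_all add: K_def)
    ultimately show ?thesis by blast
  qed
  then show thesis using that[of "set ys"] K by auto
qed

lemma path_edges_acyclic:
  assumes "distinct xs"
  shows "\<not> has_cycle (path_edges xs)"
proof
  assume "has_cycle (path_edges xs)"
  then obtain C where "finite C" "C \<noteq> {}"
    and nbrs: "\<And>y. y \<in> C \<Longrightarrow> \<exists>a\<in>C. \<exists>b\<in>C. a \<noteq> b \<and> {y, a} \<in> path_edges xs \<and> {y, b} \<in> path_edges xs"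
    by (rule has_cycle_two_neighbours) auto
  have "C \<subseteq> set xs" using nbrs path_edge_subset_set by blast
  define Q where "Q = {p. p < length xs \<and> xs ! p \<in> C}"
  define M where "M = Max Q"
  obtain c where "c \<in> C" using \<open>C \<noteq> {}\<close> by blast
  then obtain p where "p < length xs" "xs ! p = c" using \<open>C \<subseteq> set xs\<close> by (meson in_set_conv_nth subsetD)
  then have "Q \<noteq> {}" using \<open>c \<in> C\<close> unfolding Q_def by blast
  moreover have "finite Q" unfolding Q_def by simp
  ultimately have "M \<in> Q" and above: "\<And>q. q \<in> Q \<Longrightarrow> q \<le> M" unfolding M_def by auto
  then have M: "M < length xs" "xs ! M \<in> C" unfolding Q_def by auto
  \<comment> \<open>\<open>xs ! M\<close> has the largest position of all cycle vertices, so both its cycle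
      neighbours must be its predecessor on the path\<close>
  have "z = xs ! (M - 1)" if "z \<in> C" "{xs ! M, z} \<in> path_edges xs" for z
  proof -
    have "\<not> (M + 1 < length xs \<and> z = xs ! (M + 1))"
      using above[of "M + 1"] \<open>z \<in> C\<close> unfolding Q_def by auto
    then show ?thesis using path_edge_neighbour[OF assms M(1) that(2)] by blast
  qed
  then show False using nbrs[OF M(2)] by metis
qed

lemma path_edges_is_tree:
  assumes "distinct xs" and "xs \<noteq> []"
  shows "is_tree (set xs) (path_edges xs)"
  unfolding is_tree_def
  by (simp add: assms connected_on_path_edges path_edges_acyclic path_edge_subset_set)

text \<open>Off the path the \<open>THE\<close> is unspecified, but the colour is still 0 or 1.\<close>
definition alternating_colour :: "'a list \<Rightarrow> 'a set \<Rightarrow> nat" where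
  "alternating_colour xs e = (THE i. i + 1 < length xs \<and> e = {xs ! i, xs ! (i + 1)}) mod 2"

lemma alternating_colour_path_edge:
  assumes "distinct xs" and "i + 1 < length xs"
  shows "alternating_colour xs {xs ! i, xs ! (i + 1)} = i mod 2"
proof -
  have "(THE j. j + 1 < length xs \<and> {xs ! i, xs ! (i + 1)} = {xs ! j, xs ! (j + 1)}) = i"
    using assms path_edge_index_unique by (intro the_equality) fastforce+
  then show ?thesis unfolding alternating_colour_def by simp
qed

lemma proper_edges_alternating_colour:
  assumes "distinct xs"
  shows "proper_edges (alternating_colour xs) (path_edges xs)"
  unfolding proper_edges_def
proof (intro ballI impI)
  fix e e' assume "e \<in> path_edges xs" "e' \<in> path_edges xs" and meet: "e \<noteq> e' \<and> e \<inter> e' \<noteq> {}"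
  then obtain i j where i: "i + 1 < length xs" "e = {xs ! i, xs ! (i + 1)}"
    and j: "j + 1 < length xs" "e' = {xs ! j, xs ! (j + 1)}"
    unfolding path_edges_def by blast
  have "{xs ! i, xs ! (i + 1)} \<inter> {xs ! j, xs ! (j + 1)} \<noteq> {}" "i \<noteq> j"
    using meet i(2) j(2) by auto
  then have "j = i + 1 \<or> i = j + 1" using path_edges_meet[OF assms i(1) j(1)] by auto
  then have "i mod 2 \<noteq> j mod 2" by (auto simp: mod_Suc split: if_splits)
  then show "alternating_colour xs e \<noteq> alternating_colour xs e'"
    using i j alternating_colour_path_edge[OF assms] by auto
qed

lemma alternating_colour_image:
  assumes "distinct xs" and "3 \<le> length xs" and "path_edges xs \<subseteq> F"
  shows "alternating_colour xs ` F = {0, 1}"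
proof
  show "alternating_colour xs ` F \<subseteq> {0, 1}" unfolding alternating_colour_def by auto
  have "{xs ! 0, xs ! 1} \<in> F" "{xs ! 1, xs ! 2} \<in> F"
    using path_edgesI[of 0 xs] path_edgesI[of 1 xs] assms(2,3) by (auto simp: numeral_2_eq_2)
  moreover have "alternating_colour xs {xs ! 0, xs ! 1} = 0" "alternating_colour xs {xs ! 1, xs ! 2} = 1"
    using alternating_colour_path_edge[OF assms(1), of 0] alternating_colour_path_edge[OF assms(1), of 1]
      assms(2) by (simp_all add: numeral_2_eq_2)
  ultimately show "{0, 1} \<subseteq> alternating_colour xs ` F" by (metis empty_subsetI image_eqI insert_subset)
qed

lemma k_proper_coloring_spanning_tree:
  assumes "is_tree V F" and "F \<subseteq> E" and "proper_edges c F"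
  shows "k_proper_coloring V E k c"
  using assms unfolding k_proper_coloring_def S_tree_def by blast

theorem mainTheorem4:
  fixes V :: "'a set" and E :: "'a set set" and n k :: nat
  assumes "simple_graph V E"
    and "connected_on V E"
    and "card V = n"
    and "n \<ge> 3"
    and "traceable V E"
    and "3 \<le> k" and "k \<le> n"
  shows "px V E k = 2"
proof -
  obtain xs where xs: "distinct xs" "set xs = V" "walk E xs"
    using assms(5) unfolding traceable_def by blast
  then have "length xs = n" using assms(3) distinct_card by fastforce
  then have "xs \<noteq> []" "3 \<le> length xs" using assms(4) by auto
  have "is_tree V (path_edges xs)" using path_edges_is_tree[OF xs(1) \<open>xs \<noteq> []\<close>] xs(2) by simp
  then have "k_proper_coloring V E k (alternating_colour xs)"
    using path_edges_subset[OF xs(3)] proper_edges_alternating_colour[OF xs(1)]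
    by (rule k_proper_coloring_spanning_tree)
  moreover have "card (alternating_colour xs ` E) = 2"
    using alternating_colour_image[OF xs(1) \<open>3 \<le> length xs\<close> path_edges_subset[OF xs(3)]] by simp
  ultimately show ?thesis
    unfolding px_def
    using k_proper_coloring_ge_2_colours[OF assms(1)] assms(3,6,7)
    by (intro Least_equality) blast+
qed

end
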